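(* Let $\mathbf{k}$ be a field of characteristic zero, $n\ge4$, and $S=(a_1,\dots,a_n)$ with all $a_i$ positive integers. Let $B_S=\mathbf{k}[X_1,\dots,X_n]/\langle X_1^{a_1}+\cdots+X_n^{a_n}\rangle=\mathbf{k}[x_1,\dots,x_n]$ where $x_i$ is the image of $X_i$, let $L=\mathrm{lcm}(S)$ and $(d_1,\dots,d_n)=(L/a_1,\dots,L/a_n)$. Then: (a) $\gcd(d_1,\dots,d_n)=1$ and $\mathrm{type}(d_1,\dots,d_n)=\mathrm{cotype}(a_1,\dots,a_n)$. (b) For each $i\in\{1,\dots,n\}$: $\gcd(d_1,\dots,\widehat{d_i},\dots,d_n)\neq1 \iff \mathrm{lcm}(a_1,\dots,\widehat{a_i},\dots,a_n)\neq\mathrm{lcm}(S)\iff i\in J(S)$. (c) $x_1,\dots,x_n$ are homogeneous prime elements of $B_S$ (with respect to the standard $\mathbb{N}$-grading) and are pairwise non-associates.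
   Context: The standard $\mathbb{N}$-grading of $B_S$ is the unique $\mathbb{N}$-grading in which each $x_i$ is homogeneous of degree $d_i=L/a_i$. For a tuple $T=(t_1,\dots,t_n)$: $T_i$ is $T$ with the $i$-th entry omitted; $J^*(T)=\{i:\gcd(T_i)\neq\gcd(T)\}$, $\mathrm{type}(T)=|J^*(T)|$; $J(T)=\{i: t_i\nmid \mathrm{lcm}(T_i)\}$, $\mathrm{cotype}(T)=|J(T)|$. A hat denotes omission. *)

theory Defs
  imports Main "HOL-Library.Poly_Mapping"
begin

text \<open>A tuple T = (t_1,...,t_n) is represented as a list of length n, indexed 0..n-1.\<close>

definition tgcd :: "nat list \<Rightarrow> nat" where
  "tgcd T = Gcd (set T)"

definition tlcm :: "nat list \<Rightarrow> nat" where
  "tlcm T = Lcm (set T)"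

definition omit :: "nat \<Rightarrow> nat list \<Rightarrow> nat list" where
  "omit i T = take i T @ drop (Suc i) T"

definition Jstar :: "nat list \<Rightarrow> nat set" where
  "Jstar T = {i. i < length T \<and> tgcd (omit i T) \<noteq> tgcd T}"

definition ttype :: "nat list \<Rightarrow> nat" where
  "ttype T = card (Jstar T)"

definition J :: "nat list \<Rightarrow> nat set" where
  "J T = {i. i < length T \<and> \<not> (T ! i dvd tlcm (omit i T))}"

definition cotype :: "nat list \<Rightarrow> nat" where
  "cotype T = card (J T)"

definition dtuple :: "nat list \<Rightarrow> nat list" where
  "dtuple S = map (\<lambda>ai. tlcm S div ai) S"

text \<open>The polynomial ring k[X_0..X_{n-1}] is the subring
  polys_in n of polynomials only involving the variables with index < n.\<close>

type_synonym 'k mpoly = "(nat \<Rightarrow>\<^sub>0 nat) \<Rightarrow>\<^sub>0 'k"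

definition Var :: "nat \<Rightarrow> 'k::comm_semiring_1 mpoly" where
  "Var i = Poly_Mapping.single (Poly_Mapping.single i 1) 1"

definition polys_in :: "nat \<Rightarrow> 'k::comm_semiring_1 mpoly set" where
  "polys_in n = {p. \<forall>m \<in> Poly_Mapping.keys p. Poly_Mapping.keys m \<subseteq> {..<n}}"

definition fermat_poly :: "nat list \<Rightarrow> 'k::comm_semiring_1 mpoly" where
  "fermat_poly S = (\<Sum>i<length S. Var i ^ (S ! i))"

definition in_ideal :: "nat \<Rightarrow> 'k::comm_ring_1 mpoly \<Rightarrow> 'k mpoly \<Rightarrow> bool" where
  "in_ideal n f h \<longleftrightarrow> (\<exists>g \<in> polys_in n. h = f * g)"

text \<open>Divisibility in the quotient ring B = k[X_0..X_{n-1}]/<f>, expressed on representatives: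
  the class of p divides the class of q iff q - p*c lies in <f> for some c.\<close>
definition qdvd :: "nat \<Rightarrow> 'k::comm_ring_1 mpoly \<Rightarrow> 'k mpoly \<Rightarrow> 'k mpoly \<Rightarrow> bool" where
  "qdvd n f p q \<longleftrightarrow> (\<exists>c \<in> polys_in n. in_ideal n f (q - p * c))"

definition qprime :: "nat \<Rightarrow> 'k::comm_ring_1 mpoly \<Rightarrow> 'k mpoly \<Rightarrow> bool" where
  "qprime n f p \<longleftrightarrow> p \<in> polys_in n \<and> \<not> in_ideal n f p \<and> \<not> qdvd n f p 1 \<and>
     (\<forall>a \<in> polys_in n. \<forall>b \<in> polys_in n. qdvd n f p (a * b) \<longrightarrow> qdvd n f p a \<or> qdvd n f p b)"

definition qassoc :: "nat \<Rightarrow> 'k::comm_ring_1 mpoly \<Rightarrow> 'k mpoly \<Rightarrow> 'k mpoly \<Rightarrow> bool" where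
  "qassoc n f p q \<longleftrightarrow> qdvd n f p q \<and> qdvd n f q p"

definition whomog :: "(nat \<Rightarrow> nat) \<Rightarrow> nat \<Rightarrow> 'k::zero mpoly \<Rightarrow> bool" where
  "whomog w D p \<longleftrightarrow> (\<forall>m \<in> Poly_Mapping.keys p. (\<Sum>j \<in> Poly_Mapping.keys m. Poly_Mapping.lookup m j * w j) = D)"

end

theory Submission
  imports Defs "Berlekamp_Zassenhaus.Unique_Factorization_Poly"
begin

text \<open>
  If every entry of a nonempty family divides \<open>L\<close>, the gcd of the quotients \<open>L / a\<^sub>j\<close> is
  \<open>L\<close> divided by the lcm of the family. Applied to \<open>S\<close> and to \<open>S\<close> with the \<open>i\<close>-th entry
  omitted, this gives \<open>gcd d = 1\<close>, and the gcd of \<open>d\<close> without \<open>d\<^sub>i\<close> is \<open>1\<close> exactly when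
  the remaining \<open>a\<^sub>j\<close> still have lcm \<open>L\<close>, i.e. when \<open>a\<^sub>i\<close> divides their lcm.

  Modulo \<open>x\<^sub>i\<close>, the ring \<open>B\<^sub>S\<close> becomes \<open>k[X\<^sub>j : j \<noteq> i] / (F)\<close> with
  \<open>F = \<Sum>\<^sub>j\<^sub>\<noteq>\<^sub>i X\<^sub>j^a\<^sub>j\<close>, so \<open>x\<^sub>i\<close> is prime once \<open>F\<close> is a prime polynomial, and
  \<open>x\<^sub>i\<close>, \<open>x\<^sub>j\<close> are not associates because \<open>F\<close> does not divide \<open>X\<^sub>j\<close>. To see that
  \<open>F\<close> is prime, pick distinct \<open>y\<close>, \<open>z\<close> among the at least three remaining indices and
  let \<open>K\<close> be the fraction field of \<open>k[X]\<close>. As a polynomial in \<open>X\<^sub>y\<close> over \<open>K[X\<^sub>z]\<close>,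
  \<open>F\<close> is monic with constant term \<open>X\<^sub>z^a\<^sub>z + e\<close>, where \<open>e \<noteq> 0\<close> involves neither
  variable. In characteristic zero this constant term is separable, so it has a prime factor
  \<open>\<pi>\<close> of multiplicity one and \<open>F\<close> is Eisenstein at \<open>\<pi>\<close>. Since \<open>F\<close> is monic in
  \<open>X\<^sub>y\<close>, divisibility by \<open>F\<close> over \<open>K[X\<^sub>z]\<close> descends to \<open>k[X]\<close>.
\<close>

section \<open>Gcd and lcm of the tuples\<close>

lemma Gcd_div_image_eq_div_Lcm:
  fixes L :: nat
  assumes "A \<noteq> {}" "0 \<notin> A" "\<forall>x\<in>A. x dvd L" "L > 0"
  shows "Gcd ((\<lambda>x. L div x) ` A) = L div Lcm A"
proof (rule Gcd_eqI)
  have "Lcm A dvd L"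
    using assms by (auto intro: Lcm_least)
  with \<open>L > 0\<close> have "Lcm A \<noteq> 0"
    by auto
  have common_divisor_iff: "(\<forall>x\<in>A. d dvd L div x) \<longleftrightarrow> d dvd L div Lcm A" for d
  proof -
    have "(\<forall>x\<in>A. d dvd L div x) \<longleftrightarrow> (\<forall>x\<in>A. d * x dvd L)"
      using assms by (metis dvd_div_iff_mult)
    also have "\<dots> \<longleftrightarrow> Lcm ((*) d ` A) dvd L"
      by (simp add: Lcm_dvd_iff)
    also have "\<dots> \<longleftrightarrow> d * Lcm A dvd L"
      using \<open>A \<noteq> {}\<close> by (simp add: Lcm_mult)
    finally show ?thesis
      using \<open>Lcm A dvd L\<close> \<open>Lcm A \<noteq> 0\<close> by (simp add: dvd_div_iff_mult)
  qed
  show "c dvd L div Lcm A" if "\<And>b. b \<in> (\<lambda>x. L div x) ` A \<Longrightarrow> c dvd b" for c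
    using that common_divisor_iff by blast
  show "L div Lcm A dvd b" if "b \<in> (\<lambda>x. L div x) ` A" for b
    using that common_divisor_iff[of "L div Lcm A"] by auto
qed simp

lemma set_omit: "i < length S \<Longrightarrow> set S = insert (S ! i) (set (omit i S))"
  unfolding omit_def by (metis Un_insert_right id_take_nth_drop list.set(2) set_append)

lemma set_omit_subset: "set (omit i S) \<subseteq> set S"
  unfolding omit_def using set_take_subset set_drop_subset by fastforce

lemma omit_map: "omit i (map f S) = map f (omit i S)"
  by (simp add: omit_def take_map drop_map)

lemma tlcm_pos: "0 \<notin> set S \<Longrightarrow> tlcm S > 0"
  unfolding tlcm_def by (metis Lcm_0_iff finite_set gr0I)

lemma tgcd_map_div_tlcm:
  assumes "set T \<subseteq> set S" "T \<noteq> []" "0 \<notin> set S"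
  shows "tgcd (map (\<lambda>x. tlcm S div x) T) = tlcm S div tlcm T"
  unfolding tgcd_def tlcm_def set_map using assms tlcm_pos[of S]
  by (intro Gcd_div_image_eq_div_Lcm) (auto simp: tlcm_def intro: dvd_Lcm)

lemma tgcd_dtuple: "S \<noteq> [] \<Longrightarrow> 0 \<notin> set S \<Longrightarrow> tgcd (dtuple S) = 1"
  using tgcd_map_div_tlcm[of S S] tlcm_pos[of S] by (simp add: dtuple_def)

lemma tgcd_omit_dtuple_eq_1_iff:
  assumes "length S \<ge> 2" "i < length S" "0 \<notin> set S"
  shows "tgcd (omit i (dtuple S)) = 1 \<longleftrightarrow> tlcm (omit i S) = tlcm S"
proof -
  have "omit i S \<noteq> []"
    using assms by (auto simp: omit_def)
  then have tgcd_eq: "tgcd (omit i (dtuple S)) = tlcm S div tlcm (omit i S)"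
    using assms set_omit_subset by (simp add: dtuple_def omit_map tgcd_map_div_tlcm)
  have "tlcm (omit i S) dvd tlcm S"
    unfolding tlcm_def by (rule Lcm_subset[OF set_omit_subset])
  then obtain k where k: "tlcm S = tlcm (omit i S) * k"
    by (elim dvdE)
  moreover have "tlcm (omit i S) > 0" "k > 0"
    using k tlcm_pos[OF \<open>0 \<notin> set S\<close>] by simp_all
  ultimately show ?thesis
    using tgcd_eq by auto
qed

lemma tlcm_omit_eq_tlcm_iff:
  assumes "i < length S"
  shows "tlcm (omit i S) = tlcm S \<longleftrightarrow> i \<notin> J S"
proof -
  have "tlcm S = lcm (S ! i) (tlcm (omit i S))"
    using set_omit[OF assms] by (simp add: tlcm_def)
  then have "tlcm (omit i S) = tlcm S \<longleftrightarrow> S ! i dvd tlcm (omit i S)"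
    by (simp add: eq_commute[of "tlcm (omit i S)"])
  then show ?thesis
    using assms by (simp add: J_def)
qed

lemma Jstar_dtuple:
  assumes "length S \<ge> 2" "0 \<notin> set S"
  shows "Jstar (dtuple S) = J S"
proof -
  have "tgcd (dtuple S) = 1"
    using assms by (intro tgcd_dtuple) auto
  then show ?thesis
    using assms tgcd_omit_dtuple_eq_1_iff[of S] tlcm_omit_eq_tlcm_iff[of _ S]
    by (auto simp: Jstar_def J_def dtuple_def)
qed

section \<open>Ring homomorphisms and univariate polynomials\<close>

lemma comm_ring_hom_comp:
  assumes "comm_ring_hom f" "comm_ring_hom g"
  shows "comm_ring_hom (g \<circ> f)"
proof -
  interpret f: comm_ring_hom f by fact
  interpret g: comm_ring_hom g by fact
  show ?thesis
    by unfold_locales (simp_all add: f.hom_add f.hom_mult g.hom_add g.hom_mult)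
qed

lemma inj_comm_ring_hom_comp:
  assumes "inj_comm_ring_hom f" "inj_comm_ring_hom g"
  shows "inj_comm_ring_hom (g \<circ> f)"
proof -
  interpret f: inj_comm_ring_hom f by fact
  interpret g: inj_comm_ring_hom g by fact
  show ?thesis
    by unfold_locales (simp_all add: f.hom_add f.hom_mult g.hom_add g.hom_mult)
qed

lemma prime_elem_if_hom_reflects_dvd:
  assumes "comm_ring_hom h" "prime_elem (h F)" "\<And>X. h F dvd h X \<Longrightarrow> F dvd X"
  shows "prime_elem F"
proof -
  interpret comm_ring_hom h by fact
  show ?thesis
  proof (rule prime_elemI)
    show "F \<noteq> 0"
    proof
      assume "F = 0"
      with assms(2) show False
        by simp
    qed
    show "\<not> F dvd 1"
    proof
      assume "F dvd 1"
      then have "h F dvd 1"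
        by (rule hom_dvd_1)
      with prime_elem_not_unit[OF assms(2)] show False
        by contradiction
    qed
    show "F dvd a \<or> F dvd b" if "F dvd a * b" for a b
    proof -
      have "h F dvd h a * h b"
        using hom_dvd[OF that] by (simp only: hom_mult)
      then have "h F dvd h a \<or> h F dvd h b"
        by (rule prime_elem_dvd_multD[OF assms(2)])
      then show ?thesis
        using assms(3) by blast
    qed
  qed
qed

lemma degree_monom_add_const: "k > 0 \<Longrightarrow> degree (monom 1 k + [:c :: 'a::comm_semiring_1:]) = k"
  by (subst degree_add_eq_left) (simp_all add: degree_monom_eq)

lemma lead_coeff_monom_add_const: "k > 0 \<Longrightarrow> lead_coeff (monom 1 k + [:c :: 'a::comm_semiring_1:]) = 1"
  by (cases k) (simp_all add: degree_monom_add_const)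

lemma map_poly_monom_add_const:
  assumes "comm_ring_hom \<phi>"
  shows "map_poly \<phi> (monom 1 k + [:c:]) = monom 1 k + [:\<phi> c:]"
proof -
  interpret comm_ring_hom \<phi>
    by fact
  show ?thesis
    by (rule poly_eqI) (simp add: coeff_map_poly hom_add coeff_pCons split: nat.split)
qed

lemma dvd_if_map_poly_dvd_monic:
  fixes \<phi> :: "'a::comm_ring_1 \<Rightarrow> 'b::idom"
  assumes "inj_comm_ring_hom \<phi>" "lead_coeff G = 1" "map_poly \<phi> G dvd map_poly \<phi> P"
  shows "G dvd P"
proof -
  interpret \<phi>: inj_comm_ring_hom \<phi>
    by fact
  interpret map_\<phi>: map_poly_inj_comm_ring_hom \<phi> ..
  obtain q r where qr: "pseudo_divmod P G = (q, r)"
    by force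
  have "G \<noteq> 0"
    using assms(2) by auto
  with qr assms(2) have P: "P = G * q + r" and r: "r = 0 \<or> degree r < degree G"
    using pseudo_divmod[OF \<open>G \<noteq> 0\<close> qr] by simp_all
  have "map_poly \<phi> G dvd map_poly \<phi> r"
    using assms(3) by (simp add: P map_\<phi>.hom_add map_\<phi>.hom_mult dvd_add_right_iff)
  have "r = 0"
  proof (rule ccontr)
    assume "r \<noteq> 0"
    then have "degree G \<le> degree r"
      using dvd_imp_degree_le[OF \<open>map_poly \<phi> G dvd map_poly \<phi> r\<close>] by simp
    with r \<open>r \<noteq> 0\<close> show False
      by linarith
  qed
  then show ?thesis
    by (simp add: P)
qed

lemma square_dvd_imp_dvd_pderiv:
  assumes "\<pi>\<^sup>2 dvd p"
  shows "\<pi> dvd pderiv p"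
proof -
  from assms obtain h where "p = \<pi> * (\<pi> * h)"
    by (metis dvdE mult.assoc power2_eq_square)
  then show ?thesis
    by (simp add: pderiv_mult mult.assoc dvd_add)
qed

lemma simple_prime_factor_monom_add_const:
  fixes e :: "'a::field_gcd"
  assumes "e \<noteq> 0" "b > 0" "of_nat b \<noteq> (0 :: 'a)"
  obtains \<pi> where "prime_elem \<pi>" "\<pi> dvd monom 1 b + [:e:]" "\<not> \<pi>\<^sup>2 dvd monom 1 b + [:e:]"
proof -
  let ?C = "monom 1 b + [:e:]"
  have "?C \<noteq> 0" "\<not> is_unit ?C"
    using degree_monom_add_const[OF \<open>b > 0\<close>, of e] \<open>b > 0\<close> by (auto simp: is_unit_poly_iff)
  then obtain \<pi> where "\<pi> dvd ?C" "prime \<pi>"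
    using prime_divisor_exists by blast
  moreover have "\<not> \<pi>\<^sup>2 dvd ?C"
  proof
    assume "\<pi>\<^sup>2 dvd ?C"
    moreover have "pderiv ?C = smult (of_nat b) ([:0, 1:] ^ (b - 1))"
      by (simp add: pderiv_add pderiv_monom) (simp add: monom_altdef)
    ultimately have "\<pi> dvd [:0, 1:] ^ (b - 1)"
      using square_dvd_imp_dvd_pderiv[of \<pi> ?C] assms(3) by (simp add: dvd_smult_iff)
    then have "\<pi> dvd monom 1 b"
      unfolding monom_altdef using le_imp_power_dvd[of "b - 1" b] dvd_trans by (metis diff_le_self smult_1_left)
    with \<open>\<pi> dvd ?C\<close> have "\<pi> dvd [:e:]"
      by (simp add: dvd_add_right_iff)
    moreover have "is_unit [:e:]"
      using \<open>e \<noteq> 0\<close> by (simp add: is_unit_const_poly_iff)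
    ultimately show False
      using \<open>prime \<pi>\<close> dvd_unit_imp_unit not_prime_unit by blast
  qed
  ultimately show ?thesis
    using that by blast
qed

lemma prime_elem_not_dvd_coeff_mult:
  fixes G H :: "'a::idom poly"
  assumes "prime_elem \<pi>" "\<forall>k<i. \<pi> dvd coeff G k" "\<forall>k<j. \<pi> dvd coeff H k"
    and "\<not> \<pi> dvd coeff G i" "\<not> \<pi> dvd coeff H j"
  shows "\<not> \<pi> dvd coeff (G * H) (i + j)"
proof
  assume "\<pi> dvd coeff (G * H) (i + j)"
  moreover have "coeff (G * H) (i + j) =
      coeff G i * coeff H j + (\<Sum>k\<in>{..i + j} - {i}. coeff G k * coeff H (i + j - k))"
    unfolding coeff_mult by (subst sum.remove[of _ i]) auto
  moreover have "\<pi> dvd (\<Sum>k\<in>{..i + j} - {i}. coeff G k * coeff H (i + j - k))"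
  proof (rule dvd_sum)
    fix k
    assume "k \<in> {..i + j} - {i}"
    then have "k < i \<or> i + j - k < j"
      by auto
    then show "\<pi> dvd coeff G k * coeff H (i + j - k)"
      using assms(2,3) by auto
  qed
  ultimately have "\<pi> dvd coeff G i * coeff H j"
    by (simp add: dvd_add_left_iff)
  then show False
    using assms by (simp add: prime_elem_dvd_mult_iff)
qed

lemma obtain_least_coeff_not_dvd:
  assumes "\<not> \<pi> dvd lead_coeff G"
  obtains i where "i \<le> degree G" "\<not> \<pi> dvd coeff G i" "\<forall>k<i. \<pi> dvd coeff G k"
proof
  let ?i = "LEAST i. \<not> \<pi> dvd coeff G i"
  show "?i \<le> degree G" "\<not> \<pi> dvd coeff G ?i"
    using Least_le[of "\<lambda>i. \<not> \<pi> dvd coeff G i" "degree G"]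
      LeastI[of "\<lambda>i. \<not> \<pi> dvd coeff G i" "degree G"] assms by auto
  show "\<forall>k<?i. \<pi> dvd coeff G k"
    using not_less_Least by blast
qed

lemma irreducible_monic_Eisenstein:
  fixes F :: "'a::idom_divide poly"
  assumes \<pi>: "prime_elem \<pi>" and monic: "lead_coeff F = 1" and "degree F > 0"
    and low: "\<forall>k<degree F. \<pi> dvd coeff F k" and "\<not> \<pi>\<^sup>2 dvd coeff F 0"
  shows "irreducible F"
proof (rule irreducibleI)
  show "F \<noteq> 0" "\<not> is_unit F"
    using \<open>degree F > 0\<close> by (auto simp: is_unit_poly_iff)
  fix G H
  assume F: "F = G * H"
  show "is_unit G \<or> is_unit H"
  proof (rule ccontr)
    assume nonunits: "\<not> (is_unit G \<or> is_unit H)"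
    have "lead_coeff G * lead_coeff H = 1"
      using monic by (simp add: F lead_coeff_mult)
    then have "lead_coeff G dvd 1" "lead_coeff H dvd 1"
      by (metis dvd_triv_left dvd_triv_right)+
    then have "degree G > 0" "degree H > 0"
      using nonunits by (metis degree_0_id gr0I is_unit_const_poly_iff)+
    have lc: "\<not> \<pi> dvd lead_coeff G" "\<not> \<pi> dvd lead_coeff H"
      using \<open>lead_coeff G dvd 1\<close> \<open>lead_coeff H dvd 1\<close> \<pi>
      by (meson dvd_trans prime_elem_not_unit)+
    obtain i where i: "i \<le> degree G" "\<not> \<pi> dvd coeff G i" "\<forall>k<i. \<pi> dvd coeff G k"
      using obtain_least_coeff_not_dvd[OF lc(1)] .
    obtain j where j: "j \<le> degree H" "\<not> \<pi> dvd coeff H j" "\<forall>k<j. \<pi> dvd coeff H k"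
      using obtain_least_coeff_not_dvd[OF lc(2)] .
    have "\<not> \<pi> dvd coeff F (i + j)"
      unfolding F using prime_elem_not_dvd_coeff_mult[OF \<pi> i(3) j(3) i(2) j(2)] .
    with low have "degree F \<le> i + j"
      by (meson not_less)
    moreover have "degree F = degree G + degree H"
      using \<open>F \<noteq> 0\<close> by (simp add: F degree_mult_eq)
    ultimately have "i = degree G" "j = degree H"
      using i(1) j(1) by linarith+
    then have "\<pi> dvd coeff G 0" "\<pi> dvd coeff H 0"
      using i(3) j(3) \<open>degree G > 0\<close> \<open>degree H > 0\<close> by auto
    then have "\<pi> * \<pi> dvd coeff G 0 * coeff H 0"
      by (rule mult_dvd_mono)
    then show False
      using \<open>\<not> \<pi>\<^sup>2 dvd coeff F 0\<close> by (simp add: F coeff_mult_0 power2_eq_square)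
  qed
qed

lemma prime_elem_monom_add_const_Eisenstein:
  fixes c :: "'a::{factorial_ring_gcd, semiring_gcd_mult_normalize}"
  assumes "prime_elem \<pi>" "\<pi> dvd c" "\<not> \<pi>\<^sup>2 dvd c" "k > 0"
  shows "prime_elem (monom 1 k + [:c:])"
proof (rule irreducible_imp_prime_elem, rule irreducible_monic_Eisenstein[OF assms(1)])
  show "\<forall>i<degree (monom 1 k + [:c:]). \<pi> dvd coeff (monom 1 k + [:c:]) i"
    using assms(2,4) by (auto simp: degree_monom_add_const coeff_pCons split: nat.split)
qed (use assms in \<open>simp_all add: degree_monom_add_const lead_coeff_monom_add_const coeff_pCons
    split: nat.split\<close>)

section \<open>Evaluation of multivariate polynomials\<close>

lemma poly_mapping_sum_single:
  "p = (\<Sum>m\<in>Poly_Mapping.keys p. Poly_Mapping.single m (Poly_Mapping.lookup p m))"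
proof (rule poly_mapping_eqI)
  fix k
  show "Poly_Mapping.lookup p k =
    Poly_Mapping.lookup (\<Sum>m\<in>Poly_Mapping.keys p. Poly_Mapping.single m (Poly_Mapping.lookup p m)) k"
    by (simp add: lookup_sum lookup_single when_def sum.delta' in_keys_iff)
qed

lemma poly_mapping_additive_induct [case_names zero single add]:
  fixes p :: "'a \<Rightarrow>\<^sub>0 'b::comm_monoid_add"
  assumes "P 0" "\<And>m a. P (Poly_Mapping.single m a)" "\<And>p q. P p \<Longrightarrow> P q \<Longrightarrow> P (p + q)"
  shows "P p"
proof -
  have "P (\<Sum>m\<in>A. Poly_Mapping.single m (f m))" if "finite A" for A f
    using that by (induction A rule: finite_induct) (simp_all add: assms)
  then show ?thesis
    by (subst poly_mapping_sum_single) simp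
qed

abbreviation mconst :: "'k::zero \<Rightarrow> 'k mpoly" where
  "mconst a \<equiv> Poly_Mapping.single 0 a"

lemma comm_ring_hom_mconst: "comm_ring_hom (mconst :: 'k::comm_ring_1 \<Rightarrow> 'k mpoly)"
  by unfold_locales (simp_all add: single_add mult_single)

definition mon_eval :: "(nat \<Rightarrow> 'b::comm_semiring_1) \<Rightarrow> (nat \<Rightarrow>\<^sub>0 nat) \<Rightarrow> 'b" where
  "mon_eval s m = (\<Prod>j\<in>Poly_Mapping.keys m. s j ^ Poly_Mapping.lookup m j)"

lemma mon_eval_superset:
  "finite A \<Longrightarrow> Poly_Mapping.keys m \<subseteq> A \<Longrightarrow> mon_eval s m = (\<Prod>j\<in>A. s j ^ Poly_Mapping.lookup m j)"
  unfolding mon_eval_def by (rule prod.mono_neutral_left) (auto simp: in_keys_iff)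

lemma mon_eval_0 [simp]: "mon_eval s 0 = 1"
  by (simp add: mon_eval_def)

lemma mon_eval_single [simp]: "mon_eval s (Poly_Mapping.single j k) = s j ^ k"
  by (cases "k = 0") (simp_all add: mon_eval_def)

lemma mon_eval_add: "mon_eval s (m + m') = mon_eval s m * mon_eval s m'"
proof -
  let ?A = "Poly_Mapping.keys m \<union> Poly_Mapping.keys m'"
  have "mon_eval s (m + m') = (\<Prod>j\<in>?A. s j ^ Poly_Mapping.lookup (m + m') j)"
    using keys_add[of m m'] by (intro mon_eval_superset) auto
  also have "\<dots> = (\<Prod>j\<in>?A. s j ^ Poly_Mapping.lookup m j) * (\<Prod>j\<in>?A. s j ^ Poly_Mapping.lookup m' j)"
    by (simp add: lookup_add power_add prod.distrib)
  also have "\<dots> = mon_eval s m * mon_eval s m'"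
    by (simp add: mon_eval_superset[of ?A m] mon_eval_superset[of ?A m'])
  finally show ?thesis .
qed

definition eval_mpoly :: "('k::zero \<Rightarrow> 'b::comm_semiring_1) \<Rightarrow> (nat \<Rightarrow> 'b) \<Rightarrow> 'k mpoly \<Rightarrow> 'b" where
  "eval_mpoly h s p = (\<Sum>m\<in>Poly_Mapping.keys p. h (Poly_Mapping.lookup p m) * mon_eval s m)"

lemma eval_mpoly_0 [simp]: "eval_mpoly h s 0 = 0"
  by (simp add: eval_mpoly_def)

lemma eval_mpoly_single:
  "h 0 = 0 \<Longrightarrow> eval_mpoly h s (Poly_Mapping.single m a) = h a * mon_eval s m"
  by (cases "a = 0") (simp_all add: eval_mpoly_def)

lemma comm_ring_hom_eval_mpoly:
  assumes "comm_ring_hom h"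
  shows "comm_ring_hom (eval_mpoly h s)"
proof -
  interpret h: comm_ring_hom h by fact
  have superset: "eval_mpoly h s p = (\<Sum>m\<in>A. h (Poly_Mapping.lookup p m) * mon_eval s m)"
    if "finite A" "Poly_Mapping.keys p \<subseteq> A" for p A
    unfolding eval_mpoly_def using that by (intro sum.mono_neutral_left) (auto simp: in_keys_iff)
  have add: "eval_mpoly h s (p + q) = eval_mpoly h s p + eval_mpoly h s q" for p q
  proof -
    let ?A = "Poly_Mapping.keys p \<union> Poly_Mapping.keys q"
    show ?thesis
      using keys_add[of p q]
      by (simp add: superset[of ?A] lookup_add h.hom_add distrib_right sum.distrib)
  qed
  have single_mult: "eval_mpoly h s (Poly_Mapping.single m a * q) =
      eval_mpoly h s (Poly_Mapping.single m a) * eval_mpoly h s q" for m a q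
  proof (induction q rule: poly_mapping_additive_induct)
    case (single m' b)
    then show ?case
      by (simp add: mult_single eval_mpoly_single h.hom_mult mon_eval_add mult_ac)
  qed (simp_all add: add distrib_left)
  have mult: "eval_mpoly h s (p * q) = eval_mpoly h s p * eval_mpoly h s q" for p q
    by (induction p rule: poly_mapping_additive_induct) (simp_all add: add single_mult distrib_right)
  show ?thesis
    by unfold_locales (simp_all add: add mult eval_mpoly_single flip: single_one)
qed

lemma eval_mpoly_Var [simp]: "h 1 = 1 \<Longrightarrow> h 0 = 0 \<Longrightarrow> eval_mpoly h s (Var i) = s i"
  by (simp add: Var_def eval_mpoly_single)

lemma eval_mpoly_mconst [simp]: "h 0 = 0 \<Longrightarrow> eval_mpoly h s (mconst a) = h a"
  by (simp add: eval_mpoly_single)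

lemma Var_neq_0 [simp]: "Var i \<noteq> (0 :: 'k::comm_semiring_1 mpoly)"
  by (metis Var_def lookup_single_eq lookup_zero one_neq_zero)

lemma Var_power: "Var i ^ k = (Poly_Mapping.single (Poly_Mapping.single i k) 1 :: 'k::comm_semiring_1 mpoly)"
  by (induction k) (simp_all add: Var_def mult_single single_add[symmetric])

lemma mon_eval_Var: "mon_eval Var m = (Poly_Mapping.single m 1 :: 'k::comm_ring_1 mpoly)"
proof -
  have "(\<Prod>j\<in>A. Poly_Mapping.single (f j) 1 :: 'k mpoly) = Poly_Mapping.single (\<Sum>j\<in>A. f j) 1"
    if "finite A" for A and f :: "nat \<Rightarrow> nat \<Rightarrow>\<^sub>0 nat"
    using that by (induction A rule: finite_induct) (simp_all add: mult_single)
  then show ?thesis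
    by (simp add: mon_eval_def Var_power flip: poly_mapping_sum_single)
qed

lemma comm_ring_hom_mpoly_single:
  fixes \<phi> :: "'k::comm_ring_1 mpoly \<Rightarrow> 'b::comm_ring_1"
  assumes "comm_ring_hom \<phi>"
  shows "\<phi> (Poly_Mapping.single m a) = \<phi> (mconst a) * mon_eval (\<lambda>j. \<phi> (Var j)) m"
proof -
  interpret comm_ring_hom \<phi> by fact
  have "Poly_Mapping.single m a = mconst a * mon_eval Var m"
    by (simp add: mon_eval_Var mult_single)
  then show ?thesis
    by (simp add: hom_mult mon_eval_def hom_prod hom_power)
qed

lemma mpoly_hom_ext:
  fixes \<phi> \<chi> :: "'k::comm_ring_1 mpoly \<Rightarrow> 'b::comm_ring_1"
  assumes "comm_ring_hom \<phi>" "comm_ring_hom \<chi>"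
    and "\<And>a. \<phi> (mconst a) = \<chi> (mconst a)" "\<And>j. \<phi> (Var j) = \<chi> (Var j)"
  shows "\<phi> p = \<chi> p"
proof -
  interpret \<phi>: comm_ring_hom \<phi> by fact
  interpret \<chi>: comm_ring_hom \<chi> by fact
  show ?thesis
  proof (induction p rule: poly_mapping_additive_induct)
    case (single m a)
    show ?case
      using comm_ring_hom_mpoly_single[OF assms(1), of m a] comm_ring_hom_mpoly_single[OF assms(2), of m a]
      by (simp add: assms(3,4))
  qed (simp_all add: \<phi>.hom_add \<chi>.hom_add)
qed

section \<open>Specialising variables\<close>

definition to_poly :: "nat \<Rightarrow> 'k::comm_ring_1 mpoly \<Rightarrow> 'k mpoly poly" where
  "to_poly y = eval_mpoly (\<lambda>a. [:mconst a:]) (\<lambda>j. if j = y then [:0, 1:] else [:Var j:])"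

lemma comm_ring_hom_to_poly: "comm_ring_hom (to_poly y :: 'k::comm_ring_1 mpoly \<Rightarrow> _)"
proof -
  have "comm_ring_hom (\<lambda>a::'k. [:mconst a:])"
    by unfold_locales (simp_all add: single_add mult_single mult.commute)
  then show ?thesis
    unfolding to_poly_def by (rule comm_ring_hom_eval_mpoly)
qed

lemma to_poly_Var: "to_poly y (Var j) = (if j = y then [:0, 1:] else [:Var j:])"
  by (simp add: to_poly_def)

lemma to_poly_mconst: "to_poly y (mconst a) = [:mconst a:]"
  by (simp add: to_poly_def)

lemma comm_ring_hom_poly_to_poly: "comm_ring_hom (\<lambda>p. poly (to_poly y p) x)"
  using comm_ring_hom_comp[OF comm_ring_hom_to_poly poly_hom.comm_ring_hom_axioms]
  by (simp add: comp_def)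

lemma poly_to_poly [simp]: "poly (to_poly y p) (Var y) = (p :: 'k::comm_ring_1 mpoly)"
proof -
  have "comm_ring_hom (id :: 'k mpoly \<Rightarrow> _)"
    by unfold_locales simp_all
  then have "poly (to_poly y p) (Var y) = id p"
    by (rule mpoly_hom_ext[OF comm_ring_hom_poly_to_poly]) (simp_all add: to_poly_Var to_poly_mconst)
  then show ?thesis
    by simp
qed

lemma inj_comm_ring_hom_to_poly: "inj_comm_ring_hom (to_poly y)"
proof -
  interpret comm_ring_hom "to_poly y"
    by (rule comm_ring_hom_to_poly)
  show ?thesis
    by unfold_locales (metis poly_0 poly_to_poly)
qed

lemma dvd_if_to_poly_dvd:
  assumes "to_poly y p dvd to_poly y (q :: 'k::comm_ring_1 mpoly)"
  shows "p dvd q"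
  using poly_hom.hom_dvd[OF assms, of "Var y"] by simp

lemma inj_comm_ring_hom_to_fract_to_poly:
  "inj_comm_ring_hom (map_poly to_fract \<circ> to_poly z :: 'k::idom mpoly \<Rightarrow> 'k mpoly fract poly)"
proof -
  interpret tf: map_poly_inj_comm_ring_hom "to_fract :: 'k mpoly \<Rightarrow> _" ..
  show ?thesis
    by (intro inj_comm_ring_hom_comp inj_comm_ring_hom_to_poly tf.inj_comm_ring_hom_axioms)
qed

lemma prime_elem_if_map_to_poly_prime:
  fixes F :: "'k::comm_ring_1 mpoly" and \<Phi> :: "'k mpoly \<Rightarrow> 'b::idom"
  assumes "inj_comm_ring_hom \<Phi>" "lead_coeff (to_poly y F) = 1"
    and "prime_elem (map_poly \<Phi> (to_poly y F))"
  shows "prime_elem F"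
proof (rule prime_elem_if_hom_reflects_dvd)
  interpret \<Phi>: inj_comm_ring_hom \<Phi>
    by fact
  interpret map_\<Phi>: map_poly_comm_ring_hom \<Phi> ..
  show "comm_ring_hom (map_poly \<Phi> \<circ> to_poly y)"
    by (intro comm_ring_hom_comp comm_ring_hom_to_poly map_\<Phi>.comm_ring_hom_axioms)
  show "prime_elem ((map_poly \<Phi> \<circ> to_poly y) F)"
    using assms(3) by simp
  show "F dvd X" if "(map_poly \<Phi> \<circ> to_poly y) F dvd (map_poly \<Phi> \<circ> to_poly y) X" for X
  proof (rule dvd_if_to_poly_dvd)
    show "to_poly y F dvd to_poly y X"
      using that unfolding comp_apply by (rule dvd_if_map_poly_dvd_monic[OF assms(1,2)])
  qed
qed

definition drop_vars :: "nat set \<Rightarrow> 'k::comm_ring_1 mpoly \<Rightarrow> 'k mpoly" where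
  "drop_vars V = eval_mpoly mconst (\<lambda>j. if j \<in> V then 0 else Var j)"

lemma comm_ring_hom_drop_vars: "comm_ring_hom (drop_vars V)"
  unfolding drop_vars_def by (rule comm_ring_hom_eval_mpoly[OF comm_ring_hom_mconst])

lemma drop_vars_Var: "drop_vars V (Var j) = (if j \<in> V then 0 else Var j)"
  by (simp add: drop_vars_def)

lemma drop_vars_single:
  "drop_vars V (Poly_Mapping.single m a :: 'k::comm_ring_1 mpoly) =
    (if Poly_Mapping.keys m \<inter> V = {} then Poly_Mapping.single m a else 0)"
proof (cases "Poly_Mapping.keys m \<inter> V = {}")
  case True
  then have "mon_eval (\<lambda>j. if j \<in> V then 0 else Var j) m = (mon_eval Var m :: 'k mpoly)"
    unfolding mon_eval_def by (intro prod.cong) auto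
  with True show ?thesis
    by (simp add: drop_vars_def eval_mpoly_single mon_eval_Var mult_single)
next
  case False
  then obtain j where "j \<in> Poly_Mapping.keys m" "j \<in> V"
    by blast
  then have "mon_eval (\<lambda>j. if j \<in> V then 0 else Var j) m = (0 :: 'k mpoly)"
    unfolding mon_eval_def by (intro prod_zero bexI[of _ j]) (auto simp: in_keys_iff power_0_left)
  with False show ?thesis
    by (simp add: drop_vars_def eval_mpoly_single)
qed

lemma lookup_drop_vars:
  "Poly_Mapping.lookup (drop_vars V p :: 'k::comm_ring_1 mpoly) m =
    (if Poly_Mapping.keys m \<inter> V = {} then Poly_Mapping.lookup p m else 0)"
proof -
  interpret comm_ring_hom "drop_vars V :: 'k mpoly \<Rightarrow> _"
    by (rule comm_ring_hom_drop_vars)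
  show ?thesis
    by (induction p rule: poly_mapping_additive_induct)
      (simp_all add: drop_vars_single lookup_single when_def hom_add lookup_add)
qed

lemma drop_vars_eq_self:
  "\<forall>m\<in>Poly_Mapping.keys p. Poly_Mapping.keys m \<inter> V = {} \<Longrightarrow> drop_vars V p = (p :: 'k::comm_ring_1 mpoly)"
  by (rule poly_mapping_eqI) (auto simp: lookup_drop_vars in_keys_iff)

lemma Var_dvd_sub_drop_vars: "Var i dvd p - drop_vars {i} (p :: 'k::comm_ring_1 mpoly)"
proof -
  have drop_vars_eq: "drop_vars {i} q = poly (to_poly i q) 0" for q :: "'k mpoly"
    by (rule mpoly_hom_ext[OF comm_ring_hom_drop_vars comm_ring_hom_poly_to_poly])
      (simp_all add: drop_vars_def to_poly_Var to_poly_mconst)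
  obtain c P where "to_poly i p = pCons c P"
    by (cases "to_poly i p")
  then have "p = c + Var i * poly P (Var i)" "drop_vars {i} p = c"
    using poly_to_poly[of i p] drop_vars_eq[of p] by simp_all
  then show ?thesis
    by (metis add_diff_cancel_left' dvd_triv_left)
qed

lemma drop_vars_atLeast_in_polys_in: "drop_vars {n..} (p :: 'k::comm_ring_1 mpoly) \<in> polys_in n"
  unfolding polys_in_def by (auto simp: lookup_drop_vars disjoint_iff not_le in_keys_iff split: if_splits)

lemma polys_in_iff_drop_vars: "p \<in> polys_in n \<longleftrightarrow> drop_vars {n..} p = (p :: 'k::comm_ring_1 mpoly)"
proof
  show "p \<in> polys_in n \<Longrightarrow> drop_vars {n..} p = p"
    unfolding polys_in_def by (intro drop_vars_eq_self) fastforce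
qed (metis drop_vars_atLeast_in_polys_in)

lemma Var_in_polys_in: "i < n \<Longrightarrow> (Var i :: 'k::comm_ring_1 mpoly) \<in> polys_in n"
  by (simp add: polys_in_def Var_def)

lemma mult_in_polys_in:
  assumes "A \<in> polys_in n" "B \<in> polys_in n"
  shows "A * B \<in> (polys_in n :: 'k::comm_ring_1 mpoly set)"
proof -
  interpret comm_ring_hom "drop_vars {n..} :: 'k mpoly \<Rightarrow> _"
    by (rule comm_ring_hom_drop_vars)
  show ?thesis
    using assms by (simp add: polys_in_iff_drop_vars hom_mult)
qed

section \<open>Sums of pure powers\<close>

definition fermat_on :: "nat set \<Rightarrow> (nat \<Rightarrow> nat) \<Rightarrow> 'k::comm_ring_1 mpoly" where
  "fermat_on T a = (\<Sum>j\<in>T. Var j ^ a j)"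

lemma fermat_poly_eq_fermat_on: "fermat_poly S = fermat_on {..<length S} ((!) S)"
  by (simp add: fermat_poly_def fermat_on_def)

lemma fermat_on_remove:
  "finite T \<Longrightarrow> y \<in> T \<Longrightarrow> fermat_on T a = Var y ^ a y + fermat_on (T - {y}) a"
  by (simp add: fermat_on_def sum.remove)

lemma to_poly_fermat_on:
  assumes "finite T" "y \<in> T"
  shows "to_poly y (fermat_on T a :: 'k::comm_ring_1 mpoly) = monom 1 (a y) + [:fermat_on (T - {y}) a:]"
proof -
  interpret comm_ring_hom "to_poly y :: 'k mpoly \<Rightarrow> _"
    by (rule comm_ring_hom_to_poly)
  have "to_poly y (fermat_on (T - {y}) a :: 'k mpoly) = [:fermat_on (T - {y}) a:]"
    by (simp add: fermat_on_def hom_sum hom_power to_poly_Var poly_const_pow sum_to_poly)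
  then show ?thesis
    by (subst fermat_on_remove[OF assms]) (simp add: hom_add hom_power to_poly_Var monom_altdef)
qed

lemma drop_vars_fermat_on:
  assumes "finite T" "\<forall>j\<in>T \<inter> V. a j > 0"
  shows "drop_vars V (fermat_on T a :: 'k::comm_ring_1 mpoly) = fermat_on (T - V) a"
proof -
  interpret comm_ring_hom "drop_vars V :: 'k mpoly \<Rightarrow> _"
    by (rule comm_ring_hom_drop_vars)
  have "drop_vars V (fermat_on T a :: 'k mpoly) = (\<Sum>j\<in>T. if j \<in> V then 0 else Var j ^ a j)"
    unfolding fermat_on_def hom_sum using assms(2)
    by (intro sum.cong) (force simp: hom_power drop_vars_Var power_0_left)+
  also have "\<dots> = fermat_on (T - V) a"
    using assms(1) by (simp add: fermat_on_def sum.If_cases Diff_eq)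
  finally show ?thesis .
qed

lemma degree_to_poly_fermat_on:
  "finite T \<Longrightarrow> y \<in> T \<Longrightarrow> a y > 0 \<Longrightarrow> degree (to_poly y (fermat_on T a :: 'k::comm_ring_1 mpoly)) = a y"
  by (simp add: to_poly_fermat_on degree_monom_add_const)

lemma fermat_on_neq_0:
  assumes "finite T" "T \<noteq> {}" "\<forall>j\<in>T. a j > 0"
  shows "fermat_on T a \<noteq> (0 :: 'k::comm_ring_1 mpoly)"
proof -
  obtain y where "y \<in> T"
    using assms(2) by blast
  interpret comm_ring_hom "to_poly y :: 'k mpoly \<Rightarrow> _"
    by (rule comm_ring_hom_to_poly)
  show ?thesis
    using degree_to_poly_fermat_on[of T y a] assms \<open>y \<in> T\<close> by (metis degree_0 hom_zero less_irrefl)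
qed

lemma fermat_on_not_dvd_Var:
  assumes "finite T" "y \<in> T" "a y > 0" "j \<noteq> y"
  shows "\<not> fermat_on T a dvd (Var j :: 'k::idom mpoly)"
proof
  interpret comm_ring_hom "to_poly y :: 'k mpoly \<Rightarrow> _"
    by (rule comm_ring_hom_to_poly)
  assume "fermat_on T a dvd (Var j :: 'k mpoly)"
  then have "to_poly y (fermat_on T a) dvd [:Var j :: 'k mpoly:]"
    using hom_dvd assms(4) by (fastforce simp: to_poly_Var)
  then have "degree (to_poly y (fermat_on T a :: 'k mpoly)) = 0"
    using dvd_imp_degree_le[of _ "[:Var j:]"] by fastforce
  then show False
    using assms by (simp add: degree_to_poly_fermat_on)
qed

lemma card_ge_3_obtain_pair:
  assumes "card T \<ge> 3"
  obtains y z where "y \<in> T" "z \<in> T" "y \<noteq> z" "T - {y, z} \<noteq> {}"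
proof -
  obtain y B where "T = insert y B" "y \<notin> B" "card B \<ge> 2"
    using assms card_le_Suc_iff[of 2 T] by (auto simp: numeral_3_eq_3)
  moreover from this obtain z C where "B = insert z C" "z \<notin> C" "card C \<ge> 1"
    using card_le_Suc_iff[of 1 B] by (auto simp: numeral_2_eq_2)
  ultimately show ?thesis
    using that[of y z] by (cases "C = {}") auto
qed

lemma prime_elem_fermat_on:
  assumes "finite T" "card T \<ge> 3" "\<forall>j\<in>T. a j > 0"
  shows "prime_elem (fermat_on T a :: 'k::field_char_0 mpoly)"
proof -
  obtain y z where yz: "y \<in> T" "z \<in> T" "y \<noteq> z" and "T - {y, z} \<noteq> {}"
    using card_ge_3_obtain_pair[OF assms(2)] .
  then have "a y > 0" "a z > 0"
    using assms(3) by simp_all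
  define \<Phi> :: "'k mpoly \<Rightarrow> 'k mpoly fract poly" where "\<Phi> = map_poly to_fract \<circ> to_poly z"
  have "inj_comm_ring_hom \<Phi>"
    unfolding \<Phi>_def by (rule inj_comm_ring_hom_to_fract_to_poly)
  let ?c = "fermat_on (T - {y}) a :: 'k mpoly"
  let ?e = "fermat_on (T - {y, z}) a :: 'k mpoly"
  have "?e \<noteq> 0"
    using assms(1,3) \<open>T - {y, z} \<noteq> {}\<close> by (intro fermat_on_neq_0) auto
  have "T - {y} - {z} = T - {y, z}"
    by auto
  with yz assms(1) have "to_poly z ?c = monom 1 (a z) + [:?e:]"
    using to_poly_fermat_on[of "T - {y}" z a] by simp
  then have \<Phi>_c: "\<Phi> ?c = monom 1 (a z) + [:to_fract ?e:]"
    unfolding \<Phi>_def comp_apply by (simp only: map_poly_monom_add_const[OF to_fract_hom.comm_ring_hom_axioms])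
  have "of_nat (a z) \<noteq> (0 :: 'k mpoly fract)"
    using \<open>a z > 0\<close> by (simp flip: to_fract_hom.hom_of_nat)
  then obtain \<pi> where "prime_elem \<pi>" "\<pi> dvd \<Phi> ?c" "\<not> \<pi>\<^sup>2 dvd \<Phi> ?c"
    using simple_prime_factor_monom_add_const[of "to_fract ?e" "a z"] \<open>?e \<noteq> 0\<close> \<open>a z > 0\<close>
    unfolding \<Phi>_c by auto
  then have "prime_elem (monom 1 (a y) + [:\<Phi> ?c:])"
    using \<open>a y > 0\<close> by (intro prime_elem_monom_add_const_Eisenstein)
  have to_poly_F: "to_poly y (fermat_on T a :: 'k mpoly) = monom 1 (a y) + [:?c:]"
    using to_poly_fermat_on[OF assms(1) yz(1)] .
  show ?thesis
  proof (rule prime_elem_if_map_to_poly_prime[OF \<open>inj_comm_ring_hom \<Phi>\<close>])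
    show "lead_coeff (to_poly y (fermat_on T a :: 'k mpoly)) = 1"
      unfolding to_poly_F by (rule lead_coeff_monom_add_const[OF \<open>a y > 0\<close>])
    show "prime_elem (map_poly \<Phi> (to_poly y (fermat_on T a :: 'k mpoly)))"
      unfolding to_poly_F map_poly_monom_add_const[OF inj_comm_ring_hom.axioms(1)[OF \<open>inj_comm_ring_hom \<Phi>\<close>]]
      by fact
  qed
qed

lemma whomog_sum: "(\<And>i. i \<in> A \<Longrightarrow> whomog w D (f i)) \<Longrightarrow> whomog w D (sum f A)"
proof (induction A rule: infinite_finite_induct)
  case (insert i A)
  then show ?case
    using keys_add[of "f i" "sum f A"] by (auto simp: whomog_def)
qed (simp_all add: whomog_def)

lemma whomog_Var_power: "whomog w (k * w i) (Var i ^ k :: 'k::comm_semiring_1 mpoly)"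
  by (cases "k = 0") (simp_all add: whomog_def Var_power)

lemma whomog_fermat_poly:
  assumes "0 \<notin> set S"
  shows "whomog (\<lambda>j. dtuple S ! j) (tlcm S) (fermat_poly S :: 'k::comm_ring_1 mpoly)"
  unfolding fermat_poly_def
proof (rule whomog_sum)
  fix j
  assume "j \<in> {..<length S}"
  then have "S ! j * dtuple S ! j = tlcm S"
    using assms by (auto simp: dtuple_def tlcm_def dvd_Lcm)
  then show "whomog (\<lambda>j. dtuple S ! j) (tlcm S) (Var j ^ S ! j :: 'k mpoly)"
    using whomog_Var_power[of "\<lambda>j. dtuple S ! j" "S ! j" j] by simp
qed

section \<open>The variables as elements of the quotient ring\<close>

lemma fermat_poly_in_polys_in: "(fermat_poly S :: 'k::comm_ring_1 mpoly) \<in> polys_in (length S)"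
proof -
  have "{..<length S} - {length S..} = {..<length S}"
    by auto
  then show ?thesis
    unfolding polys_in_iff_drop_vars fermat_poly_eq_fermat_on by (subst drop_vars_fermat_on) auto
qed

lemma qdvd_iff_ideal:
  assumes "p \<in> polys_in n" "f \<in> polys_in n" "A \<in> polys_in n"
  shows "qdvd n f p A \<longleftrightarrow> (\<exists>c g. A = p * c + f * (g :: 'k::comm_ring_1 mpoly))"
proof
  show "qdvd n f p A \<Longrightarrow> \<exists>c g. A = p * c + f * g"
    by (auto simp: qdvd_def in_ideal_def algebra_simps)
next
  interpret comm_ring_hom "drop_vars {n..} :: 'k mpoly \<Rightarrow> _"
    by (rule comm_ring_hom_drop_vars)
  assume "\<exists>c g. A = p * c + f * g"
  then obtain c g where "A = p * c + f * g"
    by blast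
  \<comment> \<open>setting the variables \<open>X\<^sub>n, X\<^sub>n\<^sub>+\<^sub>1, \<dots>\<close> to zero moves the cofactors into \<open>polys_in n\<close>\<close>
  then have "A - p * drop_vars {n..} c = f * drop_vars {n..} g"
    using assms by (metis add_diff_cancel_left' hom_add hom_mult polys_in_iff_drop_vars)
  then show "qdvd n f p A"
    unfolding qdvd_def in_ideal_def using drop_vars_atLeast_in_polys_in by blast
qed

lemma Var_fermat_on_ideal_iff:
  assumes "finite U" "i \<in> U" "a i > 0"
  shows "(\<exists>c g. A = Var i * c + fermat_on U a * g) \<longleftrightarrow>
    fermat_on (U - {i}) a dvd drop_vars {i} (A :: 'k::comm_ring_1 mpoly)"
proof
  interpret comm_ring_hom "drop_vars {i} :: 'k mpoly \<Rightarrow> _"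
    by (rule comm_ring_hom_drop_vars)
  assume "\<exists>c g. A = Var i * c + fermat_on U a * g"
  then obtain c g where "A = Var i * c + fermat_on U a * g"
    by blast
  then have "drop_vars {i} A = fermat_on (U - {i}) a * drop_vars {i} g"
    using assms by (simp add: hom_add hom_mult drop_vars_Var drop_vars_fermat_on)
  then show "fermat_on (U - {i}) a dvd drop_vars {i} A"
    by simp
next
  assume "fermat_on (U - {i}) a dvd drop_vars {i} A"
  then obtain h where h: "drop_vars {i} A = fermat_on (U - {i}) a * h"
    by blast
  obtain c where c: "A - drop_vars {i} A = Var i * c"
    using Var_dvd_sub_drop_vars by blast
  obtain k where "a i = Suc k"
    using assms(3) gr0_implies_Suc by blast
  then have "A = Var i * (c - Var i ^ k * h) + fermat_on U a * h"
    unfolding fermat_on_remove[OF assms(1,2), of a] using c h by (simp add: algebra_simps)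
  then show "\<exists>c g. A = Var i * c + fermat_on U a * g"
    by blast
qed

lemma qdvd_Var_fermat_poly_iff:
  assumes "\<forall>j<length S. S ! j > 0" "i < length S" "A \<in> polys_in (length S)"
  shows "qdvd (length S) (fermat_poly S) (Var i) A \<longleftrightarrow>
    fermat_on ({..<length S} - {i}) ((!) S) dvd drop_vars {i} (A :: 'k::comm_ring_1 mpoly)"
proof -
  have "qdvd (length S) (fermat_poly S) (Var i) A \<longleftrightarrow> (\<exists>c g. A = Var i * c + fermat_poly S * g)"
    using assms by (intro qdvd_iff_ideal Var_in_polys_in fermat_poly_in_polys_in)
  then show ?thesis
    using assms Var_fermat_on_ideal_iff[of "{..<length S}" i "(!) S" A]
    by (simp add: fermat_poly_eq_fermat_on)
qed

lemma obtain_less_avoiding: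
  assumes "(3::nat) \<le> n"
  obtains l where "l < n" "l \<noteq> i" "l \<noteq> j"
proof -
  have "\<exists>l\<in>{0, 1, 2 :: nat}. l \<noteq> i \<and> l \<noteq> j"
    by auto
  then obtain l where "l \<in> {0, 1, 2}" "l \<noteq> i" "l \<noteq> j"
    by blast
  with assms show ?thesis
    by (intro that[of l]) auto
qed

lemma qprime_Var_fermat_poly:
  assumes "length S \<ge> 4" "\<forall>j<length S. S ! j > 0" "i < length S"
  shows "qprime (length S) (fermat_poly S) (Var i :: 'k::field_char_0 mpoly)"
proof -
  let ?n = "length S"
  let ?F = "fermat_on ({..<?n} - {i}) ((!) S) :: 'k mpoly"
  have "prime_elem ?F"
    using assms by (intro prime_elem_fermat_on) auto
  have qdvd_iff: "qdvd ?n (fermat_poly S) (Var i) A \<longleftrightarrow> ?F dvd drop_vars {i} A"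
    if "A \<in> polys_in ?n" for A
    using qdvd_Var_fermat_poly_iff[OF assms(2,3) that] .
  interpret comm_ring_hom "drop_vars {i} :: 'k mpoly \<Rightarrow> _"
    by (rule comm_ring_hom_drop_vars)
  obtain y where "y < ?n" "y \<noteq> i"
    using obtain_less_avoiding[of ?n i i] assms(1) by auto
  then have "\<not> fermat_poly S dvd (Var i :: 'k mpoly)"
    using assms(2) fermat_on_not_dvd_Var[of "{..<?n}" y "(!) S" i] by (simp add: fermat_poly_eq_fermat_on)
  moreover have "\<not> qdvd ?n (fermat_poly S) (Var i) (1 :: 'k mpoly)"
    using qdvd_iff[of 1] prime_elem_not_unit[OF \<open>prime_elem ?F\<close>] by (simp add: polys_in_def)
  moreover have "qdvd ?n (fermat_poly S) (Var i) A \<or> qdvd ?n (fermat_poly S) (Var i) B"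
    if "A \<in> polys_in ?n" "B \<in> polys_in ?n" "qdvd ?n (fermat_poly S) (Var i) (A * B)" for A B :: "'k mpoly"
  proof -
    have "?F dvd drop_vars {i} A * drop_vars {i} B"
      using that(3) qdvd_iff[OF mult_in_polys_in[OF that(1,2)]] by (simp add: hom_mult)
    then show ?thesis
      by (simp add: qdvd_iff[OF that(1)] qdvd_iff[OF that(2)] prime_elem_dvd_mult_iff[OF \<open>prime_elem ?F\<close>])
  qed
  ultimately show ?thesis
    using assms(3) by (auto simp: qprime_def in_ideal_def Var_in_polys_in)
qed

lemma not_qassoc_Var_fermat_poly:
  assumes "length S \<ge> 4" "\<forall>j<length S. S ! j > 0" "i < length S" "j < length S" "i \<noteq> j"
  shows "\<not> qassoc (length S) (fermat_poly S) (Var i :: 'k::field_char_0 mpoly) (Var j)"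
proof
  let ?T = "{..<length S} - {i}"
  assume "qassoc (length S) (fermat_poly S) (Var i :: 'k mpoly) (Var j)"
  then have "qdvd (length S) (fermat_poly S) (Var i) (Var j :: 'k mpoly)"
    by (simp add: qassoc_def)
  then have "fermat_on ?T ((!) S) dvd drop_vars {i} (Var j :: 'k mpoly)"
    by (rule qdvd_Var_fermat_poly_iff[OF assms(2,3) Var_in_polys_in[OF assms(4)], THEN iffD1])
  with assms(5) have "fermat_on ?T ((!) S) dvd (Var j :: 'k mpoly)"
    by (simp add: drop_vars_Var)
  moreover obtain l where "l \<in> ?T" "l \<noteq> j"
    using obtain_less_avoiding[of "length S" i j] assms(1) by auto
  ultimately show False
    using assms(2) fermat_on_not_dvd_Var[of ?T l "(!) S" j] by auto
qed

theorem lemma4p3: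
  fixes S :: "nat list" and n :: nat
  assumes n: "length S = n" and n4: "n \<ge> 4"
    and pos: "\<forall>i < n. S ! i > 0"
  defines "d \<equiv> dtuple S"
  shows "(tgcd d = 1 \<and> ttype d = cotype S)
    \<and> (\<forall>i < n. (tgcd (omit i d) \<noteq> 1 \<longleftrightarrow> tlcm (omit i S) \<noteq> tlcm S)
                 \<and> (tlcm (omit i S) \<noteq> tlcm S \<longleftrightarrow> i \<in> J S))
    \<and> (whomog (\<lambda>j. d ! j) (tlcm S) (fermat_poly S :: 'k::field_char_0 mpoly)
         \<and> (\<forall>i < n. whomog (\<lambda>j. d ! j) (d ! i) (Var i :: 'k mpoly)
                    \<and> qprime n (fermat_poly S) (Var i :: 'k mpoly))
         \<and> (\<forall>i < n. \<forall>j < n. i \<noteq> j \<longrightarrow>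
                 \<not> qassoc n (fermat_poly S) (Var i :: 'k mpoly) (Var j)))"
proof -
  have "0 \<notin> set S" "S \<noteq> []" "length S \<ge> 2"
    using n n4 pos by (auto simp: in_set_conv_nth)
  have "tgcd d = 1 \<and> ttype d = cotype S"
    using \<open>0 \<notin> set S\<close> \<open>S \<noteq> []\<close> \<open>length S \<ge> 2\<close>
    by (simp add: d_def tgcd_dtuple ttype_def cotype_def Jstar_dtuple)
  moreover have "\<forall>i < n. (tgcd (omit i d) \<noteq> 1 \<longleftrightarrow> tlcm (omit i S) \<noteq> tlcm S)
                 \<and> (tlcm (omit i S) \<noteq> tlcm S \<longleftrightarrow> i \<in> J S)"
    using n \<open>0 \<notin> set S\<close> \<open>length S \<ge> 2\<close> tgcd_omit_dtuple_eq_1_iff[of S] tlcm_omit_eq_tlcm_iff[of _ S]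
    by (auto simp: d_def)
  moreover have "whomog (\<lambda>j. d ! j) (tlcm S) (fermat_poly S :: 'k mpoly)"
    unfolding d_def using \<open>0 \<notin> set S\<close> by (rule whomog_fermat_poly)
  moreover have "whomog (\<lambda>j. d ! j) (d ! i) (Var i :: 'k mpoly)" for i
    using whomog_Var_power[of "\<lambda>j. d ! j" 1 i] by simp
  moreover have "\<forall>i < n. qprime n (fermat_poly S) (Var i :: 'k mpoly)"
    using n n4 pos qprime_Var_fermat_poly[of S] by auto
  moreover have "\<forall>i < n. \<forall>j < n. i \<noteq> j \<longrightarrow> \<not> qassoc n (fermat_poly S) (Var i :: 'k mpoly) (Var j)"
    using n n4 pos not_qassoc_Var_fermat_poly[of S] by auto
  ultimately show ?thesis
    by blast
qed

end
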